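(* Let $(G,X,\Gamma)$ be a $(\mu,\nu)$-path system group, let $\eta\ge0$ and let $(g,A)$ be an $\eta$-quasi-convex element of $G$. There exists $\theta=\theta(\eta,g,A)\ge1$ such that for every $a\in A$ the orbit map $\mathbb Z\to X$, $m\mapsto g^ma$, is a $(\theta,0)$-quasi-isometric embedding, i.e. $\frac1\theta|m-n|\le d(g^ma,g^na)\le\theta|m-n|$ for all $m,n\in\mathbb Z$. Moreover $[g]^\infty>0$.
   Context: A path is a rectifiable continuous map $\alpha\colon[a,b]\to X$ parametrised by arc length; it is a $(\kappa,\lambda)$-quasi-geodesic if $d(\alpha(t),\alpha(t'))\le|t-t'|\le\kappa d(\alpha(t),\alpha(t'))+\lambda$. A $(\mu,\nu)$-path system group $(G,X,\Gamma)$ is a group $G$ acting properly by isometries on a geodesic metric space $X$ together with a $G$-invariant collection $\Gamma$ of paths closed under subpaths, such that any two points are joined by an element of $\Gamma$ and every element is a $(\mu,\nu)$-quasi-geodesic. A subset $Y$ is $\eta$-quasi-convex if every $\gamma\in\Gamma$ with endpoints in $Y$ lies in the closed $\eta$-neighbourhood of $Y$. An element $g$ is $\eta$-quasi-convex, written $(g,A)$, if $g$ has infinite order and $A\subseteq X$ is a $\langle g\rangle$-invariant $\eta$-quasi-convex subset on which $\langle g\rangle$ acts $\eta$-coboundedly (for all $a,a'\in A$ some $k\in\langle g\rangle$ has $d(a,ka')\le\eta$). The asymptotic translation length is $[g]^\infty=\limsup_{m\to\infty}\frac1m d(o,g^mo)$ for any $o\in X$. *)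

theory Defs
  imports "HOL-Analysis.Analysis" "HOL-Algebra.Group_Action"
begin

text \<open>A path is represented as a triple (a, b, alpha) with alpha restricted to the
  parameter interval [a,b].\<close>

type_synonym 'x rpath = "real \<times> real \<times> (real \<Rightarrow> 'x)"

definition geodesic_space :: "'x::metric_space itself \<Rightarrow> bool" where
  "geodesic_space _ \<longleftrightarrow> (\<forall>x y::'x. \<exists>\<gamma>::real \<Rightarrow> 'x. \<gamma> 0 = x \<and> \<gamma> (dist x y) = y \<and>
      (\<forall>s\<in>{0..dist x y}. \<forall>t\<in>{0..dist x y}. dist (\<gamma> s) (\<gamma> t) = \<bar>s - t\<bar>))"

definition partition_sums :: "(real \<Rightarrow> 'x::metric_space) \<Rightarrow> real \<Rightarrow> real \<Rightarrow> real set" where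
  "partition_sums \<alpha> s t = {(\<Sum>i<n. dist (\<alpha> (p i)) (\<alpha> (p (Suc i)))) | n p.
      p 0 = s \<and> p n = t \<and> (\<forall>i<n. p i \<le> p (Suc i))}"

definition arc_length_path :: "'x::metric_space rpath \<Rightarrow> bool" where
  "arc_length_path P \<longleftrightarrow> (case P of (a, b, \<alpha>) \<Rightarrow> a \<le> b \<and> continuous_on {a..b} \<alpha> \<and>
     (\<forall>s t. a \<le> s \<and> s \<le> t \<and> t \<le> b \<longrightarrow>
        bdd_above (partition_sums \<alpha> s t) \<and> Sup (partition_sums \<alpha> s t) = t - s))"

definition quasi_geodesic :: "real \<Rightarrow> real \<Rightarrow> 'x::metric_space rpath \<Rightarrow> bool" where
  "quasi_geodesic \<kappa> lam P \<longleftrightarrow> arc_length_path P \<and> (case P of (a, b, \<alpha>) \<Rightarrow>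
     (\<forall>t\<in>{a..b}. \<forall>t'\<in>{a..b}. dist (\<alpha> t) (\<alpha> t') \<le> \<bar>t - t'\<bar> \<and>
        \<bar>t - t'\<bar> \<le> \<kappa> * dist (\<alpha> t) (\<alpha> t') + lam))"

definition path_system_group ::
  "real \<Rightarrow> real \<Rightarrow> ('g, 'm) monoid_scheme \<Rightarrow> ('g \<Rightarrow> 'x::metric_space \<Rightarrow> 'x) \<Rightarrow> 'x rpath set \<Rightarrow> bool" where
  "path_system_group \<mu> \<nu> G \<phi> \<Gamma> \<longleftrightarrow>
     group G \<and> group_action G UNIV \<phi> \<and> geodesic_space TYPE('x) \<and>
     (\<forall>g\<in>carrier G. \<forall>x y. dist (\<phi> g x) (\<phi> g y) = dist x y) \<and>
     (\<forall>x r. finite {g \<in> carrier G. dist x (\<phi> g x) \<le> r}) \<and>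
     (\<forall>g\<in>carrier G. \<forall>(a, b, \<alpha>)\<in>\<Gamma>. (a, b, \<phi> g \<circ> \<alpha>) \<in> \<Gamma>) \<and>
     (\<forall>(a, b, \<alpha>)\<in>\<Gamma>. \<forall>c d. a \<le> c \<and> c \<le> d \<and> d \<le> b \<longrightarrow> (c, d, \<alpha>) \<in> \<Gamma>) \<and>
     (\<forall>x y. \<exists>(a, b, \<alpha>)\<in>\<Gamma>. \<alpha> a = x \<and> \<alpha> b = y) \<and>
     (\<forall>P\<in>\<Gamma>. quasi_geodesic \<mu> \<nu> P)"

definition quasi_convex_set :: "'x::metric_space rpath set \<Rightarrow> real \<Rightarrow> 'x set \<Rightarrow> bool" where
  "quasi_convex_set \<Gamma> \<eta> Y \<longleftrightarrow>
     (\<forall>(a, b, \<alpha>)\<in>\<Gamma>. \<alpha> a \<in> Y \<and> \<alpha> b \<in> Y \<longrightarrow> (\<forall>t\<in>{a..b}. infdist (\<alpha> t) Y \<le> \<eta>))"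

definition quasi_convex_elem ::
  "('g, 'm) monoid_scheme \<Rightarrow> ('g \<Rightarrow> 'x::metric_space \<Rightarrow> 'x) \<Rightarrow> 'x rpath set \<Rightarrow> real \<Rightarrow> 'g \<Rightarrow> 'x set \<Rightarrow> bool" where
  "quasi_convex_elem G \<phi> \<Gamma> \<eta> g A \<longleftrightarrow>
     g \<in> carrier G \<and> (\<forall>n::nat. n > 0 \<longrightarrow> g [^]\<^bsub>G\<^esub> n \<noteq> \<one>\<^bsub>G\<^esub>) \<and>
     A \<noteq> {} \<and>
     (\<forall>k::int. \<phi> (g [^]\<^bsub>G\<^esub> k) ` A \<subseteq> A) \<and>
     quasi_convex_set \<Gamma> \<eta> A \<and>
     (\<forall>a\<in>A. \<forall>a'\<in>A. \<exists>k::int. dist a (\<phi> (g [^]\<^bsub>G\<^esub> k) a') \<le> \<eta>)"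

definition asymp_trans_len ::
  "('g, 'm) monoid_scheme \<Rightarrow> ('g \<Rightarrow> 'x::metric_space \<Rightarrow> 'x) \<Rightarrow> 'g \<Rightarrow> 'x \<Rightarrow> ereal" where
  "asymp_trans_len G \<phi> g x0 = limsup (\<lambda>m::nat. ereal (dist x0 (\<phi> (g [^]\<^bsub>G\<^esub> m) x0) / real m))"

end

theory Submission
  imports Defs "HOL-Algebra.Multiplicative_Group"
begin

text \<open>Fix a base point \<open>a\<^sub>0 \<in> A\<close>. By quasi-convexity every point of a path of \<open>\<Gamma>\<close> joining
  \<open>a \<in> A\<close> to \<open>g\<^sup>m a\<close> lies within \<open>2\<eta> + 1\<close> of some orbit point \<open>g\<^sup>k a\<^sub>0\<close>, and points of the path
  at distance at most 1 give indices \<open>k\<close> differing by a bounded amount, since properness and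
  infinite order leave only finitely many \<open>j\<close> with \<open>g\<^sup>j a\<^sub>0\<close> close to \<open>a\<^sub>0\<close>. Walking along the
  path in unit steps yields \<open>|m| \<le> C d(a, g\<^sup>m a) + B\<close>. As \<open>d(a, g\<^sup>M\<^sup>m a) \<le> M d(a, g\<^sup>m a)\<close>,
  applying this to \<open>Mm\<close> and letting \<open>M \<rightarrow> \<infinity>\<close> removes \<open>B\<close>; the upper bound is the triangle
  inequality, and the linear lower bound forces positive translation length.\<close>

lemma coarse_lipschitz_interval_bound:
  fixes f :: "real \<Rightarrow> real"
  assumes "s \<le> t" and "K \<ge> 0"
    and step: "\<And>u v. u \<in> {s..t} \<Longrightarrow> v \<in> {s..t} \<Longrightarrow> \<bar>u - v\<bar> \<le> 1 \<Longrightarrow> \<bar>f u - f v\<bar> \<le> K"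
  shows "\<bar>f t - f s\<bar> \<le> K * (t - s + 2)"
proof -
  define N :: nat where "N = nat \<lceil>t - s\<rceil> + 1"
  define \<tau> where "\<tau> i = s + real i * (t - s) / real N" for i
  have N: "0 < real N" "t - s \<le> real N" "real N \<le> t - s + 2"
    unfolding N_def using \<open>s \<le> t\<close> by linarith+
  have \<tau>_in: "\<tau> i \<in> {s..t}" if "i \<le> N" for i
  proof -
    have "real i * (t - s) \<le> (t - s) * real N"
      using that \<open>s \<le> t\<close> by (metis mult.commute mult_left_mono of_nat_mono diff_ge_0_iff_ge)
    then have "real i * (t - s) / real N \<le> t - s"
      using N by (simp add: divide_le_eq)
    then show ?thesis
      unfolding \<tau>_def using N \<open>s \<le> t\<close> by simp
  qed
  have \<tau>_step: "\<bar>\<tau> (Suc i) - \<tau> i\<bar> \<le> 1" for i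
  proof -
    have "\<tau> (Suc i) - \<tau> i = (t - s) / real N"
      unfolding \<tau>_def using N by (simp add: field_simps)
    then show ?thesis using N \<open>s \<le> t\<close> by (simp add: divide_le_eq)
  qed
  have "\<bar>f (\<tau> i) - f s\<bar> \<le> real i * K" if "i \<le> N" for i
    using that
  proof (induction i)
    case 0
    then show ?case by (simp add: \<tau>_def)
  next
    case (Suc i)
    have "\<bar>f (\<tau> (Suc i)) - f (\<tau> i)\<bar> \<le> K"
      using Suc.prems by (intro step \<tau>_in \<tau>_step) auto
    with Suc show ?case by (simp add: algebra_simps)
  qed
  from this[of N] have "\<bar>f t - f s\<bar> \<le> real N * K"
    using N by (simp add: \<tau>_def)
  also have "\<dots> \<le> K * (t - s + 2)"
    using N \<open>K \<ge> 0\<close> by (simp add: mult.commute mult_left_mono)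
  finally show ?thesis .
qed

lemma quasi_geodesicD:
  assumes "quasi_geodesic \<kappa> lam (a, b, \<alpha>)"
  shows quasi_geodesic_le: "a \<le> b"
    and quasi_geodesic_lipschitz:
      "\<And>u v. u \<in> {a..b} \<Longrightarrow> v \<in> {a..b} \<Longrightarrow> dist (\<alpha> u) (\<alpha> v) \<le> \<bar>u - v\<bar>"
    and quasi_geodesic_length_le: "b - a \<le> \<kappa> * dist (\<alpha> a) (\<alpha> b) + lam"
proof -
  show "a \<le> b"
    using assms unfolding quasi_geodesic_def arc_length_path_def by simp
  have bounds: "dist (\<alpha> u) (\<alpha> v) \<le> \<bar>u - v\<bar> \<and> \<bar>u - v\<bar> \<le> \<kappa> * dist (\<alpha> u) (\<alpha> v) + lam"
    if "u \<in> {a..b}" "v \<in> {a..b}" for u v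
    using assms that unfolding quasi_geodesic_def by simp
  then show "\<And>u v. u \<in> {a..b} \<Longrightarrow> v \<in> {a..b} \<Longrightarrow> dist (\<alpha> u) (\<alpha> v) \<le> \<bar>u - v\<bar>"
    by blast
  from bounds[of a b] \<open>a \<le> b\<close> show "b - a \<le> \<kappa> * dist (\<alpha> a) (\<alpha> b) + lam"
    by simp
qed

lemma linear_bound_of_coarse_bound:
  fixes d :: "int \<Rightarrow> real"
  assumes coarse: "\<And>m. \<bar>real_of_int m\<bar> \<le> C * d m + B"
    and "C \<ge> 0"
    and multiple: "\<And>M m. d (int M * m) \<le> real M * d m"
  shows "\<bar>real_of_int m\<bar> \<le> C * d m"
proof (rule ccontr)
  define gap where "gap = \<bar>real_of_int m\<bar> - C * d m"
  assume "\<not> ?thesis"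
  then have "gap > 0" unfolding gap_def by simp
  obtain M :: nat where M: "B / gap < real M"
    using reals_Archimedean2 by blast
  have "real M * \<bar>real_of_int m\<bar> \<le> C * d (int M * m) + B"
    using coarse[of "int M * m"] by (simp add: abs_mult)
  also have "\<dots> \<le> C * (real M * d m) + B"
    using multiple \<open>C \<ge> 0\<close> by (simp add: mult_left_mono)
  finally have "real M * gap \<le> B"
    unfolding gap_def by (simp add: algebra_simps)
  with M \<open>gap > 0\<close> show False
    by (simp add: divide_less_eq mult.commute)
qed

locale isometric_cyclic_action =
  fixes G :: "('g, 'm) monoid_scheme" and \<phi> :: "'g \<Rightarrow> 'x::metric_space \<Rightarrow> 'x" and g :: 'g
  assumes group: "group G"
    and action: "group_action G UNIV \<phi>"
    and isometric: "\<And>h x y. h \<in> carrier G \<Longrightarrow> dist (\<phi> h x) (\<phi> h y) = dist x y"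
    and generator_closed: "g \<in> carrier G"
begin

abbreviation pow_act :: "int \<Rightarrow> 'x \<Rightarrow> 'x" where
  "pow_act k \<equiv> \<phi> (g [^]\<^bsub>G\<^esub> k)"

lemma pow_closed: "g [^]\<^bsub>G\<^esub> (k::int) \<in> carrier G"
  using group.int_pow_closed[OF group generator_closed] .

lemma pow_act_pow_act: "pow_act i (pow_act j x) = pow_act (i + j) x"
  using group.int_pow_mult[OF group generator_closed, of i j]
    group_action.composition_rule[OF action, of x] pow_closed by simp

lemma act_one [simp]: "\<phi> \<one>\<^bsub>G\<^esub> x = x"
  using fun_cong[OF group_action.id_eq_one[OF action], of x] by simp

lemma dist_pow_act: "dist (pow_act k x) (pow_act k y) = dist x y"
  using isometric pow_closed by blast

lemma dist_pow_act_pow_act: "dist (pow_act m x) (pow_act n x) = dist x (pow_act (n - m) x)"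
  using dist_pow_act[of m x "pow_act (n - m) x"] by (simp add: pow_act_pow_act)

lemma dist_pow_act_nat_mult_le: "dist x (pow_act (int M * m) x) \<le> real M * dist x (pow_act m x)"
proof (induction M)
  case 0
  then show ?case by simp
next
  case (Suc M)
  have "dist x (pow_act (int (Suc M) * m) x)
      \<le> dist x (pow_act m x) + dist (pow_act m x) (pow_act (int (Suc M) * m) x)"
    by (rule dist_triangle)
  also have "dist (pow_act m x) (pow_act (int (Suc M) * m) x) = dist x (pow_act (int M * m) x)"
    by (simp add: dist_pow_act_pow_act algebra_simps)
  finally show ?case using Suc.IH by (simp add: algebra_simps)
qed

lemma dist_pow_act_mult_le: "dist x (pow_act (n * m) x) \<le> \<bar>real_of_int n\<bar> * dist x (pow_act m x)"
proof (cases "n \<ge> 0")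
  case True
  then show ?thesis using dist_pow_act_nat_mult_le[where M="nat n"] by simp
next
  case False
  have "dist x (pow_act (n * m) x) = dist x (pow_act (- n * m) x)"
    using dist_pow_act_pow_act[of "- n * m" x 0] by (simp add: dist_commute)
  then show ?thesis using dist_pow_act_nat_mult_le[where M="nat (- n)"] False by simp
qed

lemma finite_small_displacements:
  assumes proper: "finite {h \<in> carrier G. dist x (\<phi> h x) \<le> r}"
    and infinite_order: "group.ord G g = 0"
  shows "finite {j. dist x (pow_act j x) \<le> r}"
proof -
  have "inj (\<lambda>j::int. g [^]\<^bsub>G\<^esub> j)"
    using group.int_pow_eq[OF group generator_closed] infinite_order by (simp add: inj_def)
  moreover have "(\<lambda>j. g [^]\<^bsub>G\<^esub> j) ` {j. dist x (pow_act j x) \<le> r}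
      \<subseteq> {h \<in> carrier G. dist x (\<phi> h x) \<le> r}"
    using pow_closed by auto
  ultimately show ?thesis
    using proper by (meson finite_imageD finite_subset inj_on_subset subset_UNIV)
qed

lemma asymp_trans_len_pos_of_linear_lower_bound:
  assumes "\<theta> > 0" and lower: "\<And>m::nat. real m \<le> \<theta> * dist a (pow_act (int m) a)"
  shows "0 < asymp_trans_len G \<phi> g x0"
proof -
  define c where "c = dist x0 a"
  have "\<forall>\<^sub>F m in sequentially. ereal (1 / (2 * \<theta>)) \<le> ereal (dist x0 (\<phi> (g [^]\<^bsub>G\<^esub> m) x0) / real m)"
    unfolding eventually_sequentially
  proof (intro exI allI impI)
    fix m :: nat
    assume m: "nat \<lceil>4 * c * \<theta>\<rceil> + 1 \<le> m"
    have "dist a (pow_act m a) \<le> dist a x0 + dist x0 (pow_act m x0) + dist (pow_act m x0) (pow_act m a)"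
      by metric
    moreover have "real m / \<theta> \<le> dist a (pow_act m a)"
      using lower[of m] \<open>\<theta> > 0\<close> by (simp add: divide_le_eq mult.commute)
    ultimately have "real m / \<theta> - 2 * c \<le> dist x0 (pow_act m x0)"
      unfolding c_def by (simp add: dist_pow_act dist_commute)
    moreover have "2 * c \<le> real m / (2 * \<theta>)"
      using m \<open>\<theta> > 0\<close> by (simp add: field_simps) linarith
    ultimately have "real m / (2 * \<theta>) \<le> dist x0 (\<phi> (g [^]\<^bsub>G\<^esub> m) x0)"
      by (simp add: int_pow_int)
    with m \<open>\<theta> > 0\<close> show "ereal (1 / (2 * \<theta>)) \<le> ereal (dist x0 (\<phi> (g [^]\<^bsub>G\<^esub> m) x0) / real m)"
      by (simp add: field_simps)
  qed
  then have "ereal (1 / (2 * \<theta>)) \<le> asymp_trans_len G \<phi> g x0"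
    unfolding asymp_trans_len_def by (rule le_Limsup[rotated]) simp
  moreover have "0 < ereal (1 / (2 * \<theta>))" using \<open>\<theta> > 0\<close> by simp
  ultimately show ?thesis by order
qed

end

locale quasi_convex_element =
  fixes G :: "('g, 'm) monoid_scheme" and \<phi> :: "'g \<Rightarrow> 'x::metric_space \<Rightarrow> 'x"
    and \<Gamma> :: "'x rpath set" and \<mu> \<nu> \<eta> :: real and g :: 'g and A :: "'x set"
  assumes path_system: "path_system_group \<mu> \<nu> G \<phi> \<Gamma>"
    and quasi_convex: "quasi_convex_elem G \<phi> \<Gamma> \<eta> g A"

sublocale quasi_convex_element \<subseteq> isometric_cyclic_action G \<phi> g
proof (rule isometric_cyclic_action.intro)
  show "group G" "group_action G UNIV \<phi>"
    "\<And>h x y. h \<in> carrier G \<Longrightarrow> dist (\<phi> h x) (\<phi> h y) = dist x y"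
    using path_system unfolding path_system_group_def by blast+
  show "g \<in> carrier G"
    using quasi_convex unfolding quasi_convex_elem_def by blast
qed

context quasi_convex_element
begin

lemma A_nonempty: "A \<noteq> {}"
  using quasi_convex unfolding quasi_convex_elem_def by blast

lemma pow_act_mem: "a \<in> A \<Longrightarrow> pow_act k a \<in> A"
  using quasi_convex unfolding quasi_convex_elem_def by blast

lemma cobounded: "a \<in> A \<Longrightarrow> a' \<in> A \<Longrightarrow> \<exists>k. dist a (pow_act k a') \<le> \<eta>"
  using quasi_convex unfolding quasi_convex_elem_def by blast

lemma path_near_A:
  assumes "(s, t, \<alpha>) \<in> \<Gamma>" and "\<alpha> s \<in> A" and "\<alpha> t \<in> A" and "u \<in> {s..t}"
  shows "infdist (\<alpha> u) A \<le> \<eta>"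
  using quasi_convex assms unfolding quasi_convex_elem_def quasi_convex_set_def by fastforce

lemma proper: "finite {h \<in> carrier G. dist x (\<phi> h x) \<le> r}"
  using path_system unfolding path_system_group_def by blast

lemma infinite_order: "group.ord G g = 0"
  using quasi_convex group.ord_eq_0[OF group generator_closed]
  unfolding quasi_convex_elem_def by blast

lemma path_quasi_geodesic: "(s, t, \<alpha>) \<in> \<Gamma> \<Longrightarrow> quasi_geodesic \<mu> \<nu> (s, t, \<alpha>)"
  using path_system unfolding path_system_group_def by blast

lemma near_orbit:
  assumes "a\<^sub>0 \<in> A" and "infdist y A \<le> \<eta>"
  shows "\<exists>k. dist y (pow_act k a\<^sub>0) \<le> 2 * \<eta> + 1"
proof -
  have "infdist y A < \<eta> + 1" using assms by simp
  then obtain z where z: "z \<in> A" "dist y z < \<eta> + 1"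
    using A_nonempty by (auto simp: infdist_notempty cInf_less_iff)
  obtain k where "dist z (pow_act k a\<^sub>0) \<le> \<eta>"
    using cobounded[OF z(1) \<open>a\<^sub>0 \<in> A\<close>] by blast
  with z(2) have "dist y (pow_act k a\<^sub>0) \<le> 2 * \<eta> + 1"
    using dist_triangle[of y "pow_act k a\<^sub>0" z] by linarith
  then show ?thesis ..
qed

lemma translation_index_le_path_length:
  assumes "a\<^sub>0 \<in> A" and "K \<ge> 0"
    and index_bound: "\<And>i j. dist (pow_act i a\<^sub>0) (pow_act j a\<^sub>0) \<le> 4 * \<eta> + 3 \<Longrightarrow>
      \<bar>real_of_int j - real_of_int i\<bar> \<le> K"
    and path: "(s, t, \<alpha>) \<in> \<Gamma>" and "\<alpha> s \<in> A" and end_point: "\<alpha> t = pow_act m (\<alpha> s)"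
  shows "\<bar>real_of_int m\<bar> \<le> K * (t - s + 3)"
proof -
  have qg: "quasi_geodesic \<mu> \<nu> (s, t, \<alpha>)" using path_quasi_geodesic[OF path] .
  have "s \<le> t" using quasi_geodesic_le[OF qg] .
  note lipschitz = quasi_geodesic_lipschitz[OF qg]
  have "\<alpha> t \<in> A" using pow_act_mem[OF \<open>\<alpha> s \<in> A\<close>] end_point by simp
  have "\<forall>u\<in>{s..t}. \<exists>k. dist (\<alpha> u) (pow_act k a\<^sub>0) \<le> 2 * \<eta> + 1"
    using near_orbit[OF \<open>a\<^sub>0 \<in> A\<close> path_near_A[OF path \<open>\<alpha> s \<in> A\<close> \<open>\<alpha> t \<in> A\<close>]] by blast
  then obtain k where k: "\<And>u. u \<in> {s..t} \<Longrightarrow> dist (\<alpha> u) (pow_act (k u) a\<^sub>0) \<le> 2 * \<eta> + 1"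
    by (metis bchoice)
  have "\<bar>real_of_int (k t) - real_of_int (k s)\<bar> \<le> K * (t - s + 2)"
  proof (rule coarse_lipschitz_interval_bound[OF \<open>s \<le> t\<close> \<open>K \<ge> 0\<close>])
    fix u v assume uv: "u \<in> {s..t}" "v \<in> {s..t}" "\<bar>u - v\<bar> \<le> 1"
    have "dist (\<alpha> u) (\<alpha> v) \<le> 1" using lipschitz[OF uv(1,2)] uv(3) by simp
    with k[OF uv(1)] k[OF uv(2)]
    have "dist (pow_act (k v) a\<^sub>0) (pow_act (k u) a\<^sub>0) \<le> 4 * \<eta> + 3"
      using dist_triangle[of "pow_act (k v) a\<^sub>0" "pow_act (k u) a\<^sub>0" "\<alpha> v"]
        dist_triangle[of "\<alpha> v" "pow_act (k u) a\<^sub>0" "\<alpha> u"]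
      by (simp add: dist_commute)
    then show "\<bar>real_of_int (k u) - real_of_int (k v)\<bar> \<le> K" using index_bound by blast
  qed
  moreover have "\<bar>real_of_int (k t) - real_of_int (m + k s)\<bar> \<le> K"
  proof (rule index_bound)
    have "dist (\<alpha> t) (pow_act (m + k s) a\<^sub>0) \<le> 2 * \<eta> + 1"
      using k[of s] \<open>s \<le> t\<close> end_point by (simp add: dist_pow_act flip: pow_act_pow_act)
    with k[of t] \<open>s \<le> t\<close> show "dist (pow_act (m + k s) a\<^sub>0) (pow_act (k t) a\<^sub>0) \<le> 4 * \<eta> + 3"
      using dist_triangle[of "pow_act (m + k s) a\<^sub>0" "pow_act (k t) a\<^sub>0" "\<alpha> t"]
      by (simp add: dist_commute)
  qed
  ultimately show ?thesis by (simp add: algebra_simps)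
qed

lemma coarse_lower_bound:
  obtains C B where "C \<ge> 0" and "\<And>a m. a \<in> A \<Longrightarrow> \<bar>real_of_int m\<bar> \<le> C * dist a (pow_act m a) + B"
proof -
  obtain a\<^sub>0 where "a\<^sub>0 \<in> A" using A_nonempty by blast
  have "finite (abs ` {j. dist a\<^sub>0 (pow_act j a\<^sub>0) \<le> 4 * \<eta> + 3})"
    using finite_small_displacements[OF proper infinite_order] by blast
  then have "bdd_above (abs ` {j. dist a\<^sub>0 (pow_act j a\<^sub>0) \<le> 4 * \<eta> + 3})"
    by (rule bdd_above_finite)
  then obtain K0 where K0: "\<And>j. dist a\<^sub>0 (pow_act j a\<^sub>0) \<le> 4 * \<eta> + 3 \<Longrightarrow> \<bar>j\<bar> \<le> K0"
    unfolding bdd_above_def by blast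
  define K where "K = max 0 (real_of_int K0)"
  have "K \<ge> 0" unfolding K_def by simp
  have index_bound: "\<bar>real_of_int j - real_of_int i\<bar> \<le> K"
    if "dist (pow_act i a\<^sub>0) (pow_act j a\<^sub>0) \<le> 4 * \<eta> + 3" for i j
    using K0[of "j - i"] that unfolding K_def by (simp add: dist_pow_act_pow_act)
  show ?thesis
  proof
    show "K * \<bar>\<mu>\<bar> \<ge> 0" using \<open>K \<ge> 0\<close> by simp
    fix a m assume "a \<in> A"
    obtain s t \<alpha> where path: "(s, t, \<alpha>) \<in> \<Gamma>" "\<alpha> s = a" "\<alpha> t = pow_act m a"
      using path_system unfolding path_system_group_def by blast
    have "t - s \<le> \<mu> * dist (\<alpha> s) (\<alpha> t) + \<nu>"
      using quasi_geodesic_length_le[OF path_quasi_geodesic[OF path(1)]] .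
    also have "\<dots> \<le> \<bar>\<mu>\<bar> * dist a (pow_act m a) + \<bar>\<nu>\<bar>"
      unfolding path(2,3) by (intro add_mono mult_right_mono) auto
    finally have length: "t - s \<le> \<bar>\<mu>\<bar> * dist a (pow_act m a) + \<bar>\<nu>\<bar>" .
    have "\<bar>real_of_int m\<bar> \<le> K * (t - s + 3)"
      using translation_index_le_path_length[OF \<open>a\<^sub>0 \<in> A\<close> \<open>K \<ge> 0\<close> index_bound path(1)]
        path \<open>a \<in> A\<close> by simp
    also have "\<dots> \<le> K * (\<bar>\<mu>\<bar> * dist a (pow_act m a) + \<bar>\<nu>\<bar> + 3)"
      using length \<open>K \<ge> 0\<close> by (intro mult_left_mono) auto
    finally show "\<bar>real_of_int m\<bar> \<le> K * \<bar>\<mu>\<bar> * dist a (pow_act m a) + K * (\<bar>\<nu>\<bar> + 3)"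
      by (simp add: algebra_simps)
  qed
qed

lemma linear_lower_bound:
  obtains C where "C \<ge> 0" and "\<And>a m. a \<in> A \<Longrightarrow> \<bar>real_of_int m\<bar> \<le> C * dist a (pow_act m a)"
proof -
  obtain C B where "C \<ge> 0" and coarse: "\<And>a m. a \<in> A \<Longrightarrow> \<bar>real_of_int m\<bar> \<le> C * dist a (pow_act m a) + B"
    using coarse_lower_bound by blast
  show ?thesis
  proof (rule that[OF \<open>C \<ge> 0\<close>])
    fix a m assume "a \<in> A"
    show "\<bar>real_of_int m\<bar> \<le> C * dist a (pow_act m a)"
      by (rule linear_bound_of_coarse_bound[OF coarse[OF \<open>a \<in> A\<close>] \<open>C \<ge> 0\<close>
            dist_pow_act_nat_mult_le])
  qed
qed

lemma linear_upper_bound: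
  obtains D where "\<And>a m. a \<in> A \<Longrightarrow> dist a (pow_act m a) \<le> D * \<bar>real_of_int m\<bar>"
proof -
  obtain a\<^sub>0 where "a\<^sub>0 \<in> A" using A_nonempty by blast
  define D where "D = 2 * \<eta> + dist a\<^sub>0 (pow_act 1 a\<^sub>0)"
  have one_step: "dist a (pow_act 1 a) \<le> D" if "a \<in> A" for a
  proof -
    obtain k where k: "dist a (pow_act k a\<^sub>0) \<le> \<eta>"
      using cobounded \<open>a \<in> A\<close> \<open>a\<^sub>0 \<in> A\<close> by blast
    have "dist (pow_act k a\<^sub>0) (pow_act 1 (pow_act k a\<^sub>0)) = dist a\<^sub>0 (pow_act 1 a\<^sub>0)"
      using dist_pow_act_pow_act[of k a\<^sub>0 "1 + k"] by (simp add: pow_act_pow_act)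
    moreover have "dist (pow_act 1 a) (pow_act 1 (pow_act k a\<^sub>0)) \<le> \<eta>"
      using k by (simp add: dist_pow_act)
    ultimately show ?thesis
      using k dist_triangle[of a "pow_act 1 a" "pow_act k a\<^sub>0"]
        dist_triangle[of "pow_act k a\<^sub>0" "pow_act 1 a" "pow_act 1 (pow_act k a\<^sub>0)"]
      unfolding D_def by (simp add: dist_commute)
  qed
  show ?thesis
  proof (rule that)
    fix a m assume "a \<in> A"
    have "dist a (pow_act m a) \<le> \<bar>real_of_int m\<bar> * dist a (pow_act 1 a)"
      using dist_pow_act_mult_le[of a m 1] by simp
    also have "\<dots> \<le> \<bar>real_of_int m\<bar> * D"
      using \<open>a \<in> A\<close> one_step by (intro mult_left_mono) auto
    finally show "dist a (pow_act m a) \<le> D * \<bar>real_of_int m\<bar>" by (simp add: mult.commute)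
  qed
qed

lemma orbit_quasi_isometric:
  obtains \<theta> where "\<theta> \<ge> 1" and "\<And>a m n. a \<in> A \<Longrightarrow>
    \<bar>real_of_int (m - n)\<bar> / \<theta> \<le> dist (pow_act m a) (pow_act n a) \<and>
    dist (pow_act m a) (pow_act n a) \<le> \<theta> * \<bar>real_of_int (m - n)\<bar>"
proof -
  obtain C where C: "C \<ge> 0" "\<And>a m. a \<in> A \<Longrightarrow> \<bar>real_of_int m\<bar> \<le> C * dist a (pow_act m a)"
    using linear_lower_bound by blast
  obtain D where D: "\<And>a m. a \<in> A \<Longrightarrow> dist a (pow_act m a) \<le> D * \<bar>real_of_int m\<bar>"
    using linear_upper_bound by blast
  define \<theta> where "\<theta> = max 1 (max C D)"
  show ?thesis
  proof
    show "\<theta> \<ge> 1" unfolding \<theta>_def by simp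
    fix a m n assume "a \<in> A"
    have "C \<le> \<theta>" "D \<le> \<theta>" unfolding \<theta>_def by auto
    have "\<bar>real_of_int (n - m)\<bar> \<le> C * dist a (pow_act (n - m) a)"
      using C(2)[OF \<open>a \<in> A\<close>] .
    also have "\<dots> \<le> \<theta> * dist a (pow_act (n - m) a)"
      using \<open>C \<le> \<theta>\<close> by (intro mult_right_mono) auto
    finally have "\<bar>real_of_int (n - m)\<bar> \<le> \<theta> * dist a (pow_act (n - m) a)" .
    moreover have "dist a (pow_act (n - m) a) \<le> D * \<bar>real_of_int (n - m)\<bar>"
      using D[OF \<open>a \<in> A\<close>] .
    moreover have "D * \<bar>real_of_int (n - m)\<bar> \<le> \<theta> * \<bar>real_of_int (n - m)\<bar>"
      using \<open>D \<le> \<theta>\<close> by (intro mult_right_mono) auto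
    moreover have "\<theta> > 0" unfolding \<theta>_def by simp
    ultimately show "\<bar>real_of_int (m - n)\<bar> / \<theta> \<le> dist (pow_act m a) (pow_act n a) \<and>
        dist (pow_act m a) (pow_act n a) \<le> \<theta> * \<bar>real_of_int (m - n)\<bar>"
      by (simp add: dist_pow_act_pow_act abs_minus_commute divide_le_eq mult.commute)
  qed
qed

end

theorem mainTheorem13:
  fixes G :: "('g, 'm) monoid_scheme" and \<phi> :: "'g \<Rightarrow> 'x::metric_space \<Rightarrow> 'x"
    and \<Gamma> :: "'x rpath set" and \<mu> \<nu> \<eta> :: real and g :: 'g and A :: "'x set"
  assumes "path_system_group \<mu> \<nu> G \<phi> \<Gamma>"
    and "\<eta> \<ge> 0"
    and "quasi_convex_elem G \<phi> \<Gamma> \<eta> g A"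
  shows "(\<exists>\<theta>::real. \<theta> \<ge> 1 \<and> (\<forall>a\<in>A. \<forall>m n::int.
            \<bar>real_of_int (m - n)\<bar> / \<theta> \<le> dist (\<phi> (g [^]\<^bsub>G\<^esub> m) a) (\<phi> (g [^]\<^bsub>G\<^esub> n) a) \<and>
            dist (\<phi> (g [^]\<^bsub>G\<^esub> m) a) (\<phi> (g [^]\<^bsub>G\<^esub> n) a) \<le> \<theta> * \<bar>real_of_int (m - n)\<bar>))
         \<and> (\<forall>x0. asymp_trans_len G \<phi> g x0 > 0)"
proof -
  interpret quasi_convex_element G \<phi> \<Gamma> \<mu> \<nu> \<eta> g A
    using assms by unfold_locales
  obtain \<theta> where "\<theta> \<ge> 1" and qi: "\<And>a m n. a \<in> A \<Longrightarrow>
      \<bar>real_of_int (m - n)\<bar> / \<theta> \<le> dist (pow_act m a) (pow_act n a) \<and>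
      dist (pow_act m a) (pow_act n a) \<le> \<theta> * \<bar>real_of_int (m - n)\<bar>"
    using orbit_quasi_isometric by blast
  obtain a where "a \<in> A" using A_nonempty by blast
  have "real m \<le> \<theta> * dist a (pow_act (int m) a)" for m
    using qi[OF \<open>a \<in> A\<close>, of 0 "int m"] \<open>\<theta> \<ge> 1\<close> by (simp add: divide_le_eq mult.commute)
  then have "0 < asymp_trans_len G \<phi> g x0" for x0
    using \<open>\<theta> \<ge> 1\<close> by (intro asymp_trans_len_pos_of_linear_lower_bound) auto
  with \<open>\<theta> \<ge> 1\<close> qi show ?thesis by blast
qed

end
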